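(* Let $F$ be a finite field and $G$ a finite abelian group. Let $0<r<1$, for each $n$ put $k=[rn]$ (the integer nearest to $rn$), and let $A$ be chosen uniformly at random from $(FG)^{k\times n}$. Then $\lim_{n\to\infty}\Pr(A \text{ is full-rank})=1$, equivalently $\lim_{n\to\infty}\Pr(A\text{ is not full-rank})=0$, and both limits converge exponentially.
   Context: $FG$ is the group algebra of $G$ over $F$. A matrix $A\in(FG)^{k\times n}$ is full-rank if its $FG$-rank equals $k$; equivalently, the $F$-dimension of $\{\mathbf{b}A\mid\mathbf{b}\in(FG)^k\}\subseteq(FG)^n$ equals $k|G|$. *)

theory Defs
  imports Complex_Main "HOL-Library.Function_Algebras"
begin

text \<open>Group algebra FG of a finite abelian group G (written additively, type 'g)
  over a field F (type 'f): elements are functions 'g => 'f, multiplication is convolution.\<close>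

definition gconv :: "('g::{ab_group_add,finite} \<Rightarrow> 'f::field) \<Rightarrow> ('g \<Rightarrow> 'f) \<Rightarrow> 'g \<Rightarrow> 'f" where
  "gconv a b = (\<lambda>x. \<Sum>h\<in>UNIV. a h * b (x - h))"

text \<open>k x n matrices over FG: entries indexed by i < k, j < n, zero elsewhere.\<close>
definition gmats :: "nat \<Rightarrow> nat \<Rightarrow> (nat \<Rightarrow> nat \<Rightarrow> 'g::{ab_group_add,finite} \<Rightarrow> 'f::{field,finite}) set" where
  "gmats k n = {A. \<forall>i j. (k \<le> i \<or> n \<le> j) \<longrightarrow> A i j = 0}"

definition row_space :: "nat \<Rightarrow> nat \<Rightarrow> (nat \<Rightarrow> nat \<Rightarrow> 'g::{ab_group_add,finite} \<Rightarrow> 'f::field)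
    \<Rightarrow> (nat \<Rightarrow> 'g \<Rightarrow> 'f) set" where
  "row_space k n A = {(\<lambda>j. if j < n then (\<Sum>i<k. gconv (b i) (A i j)) else 0) | b. True}"

definition fscale :: "'f::field \<Rightarrow> (nat \<Rightarrow> 'g \<Rightarrow> 'f) \<Rightarrow> (nat \<Rightarrow> 'g \<Rightarrow> 'f)" where
  "fscale c v = (\<lambda>j g. c * v j g)"

definition full_rank :: "nat \<Rightarrow> nat \<Rightarrow> (nat \<Rightarrow> nat \<Rightarrow> 'g::{ab_group_add,finite} \<Rightarrow> 'f::field) \<Rightarrow> bool" where
  "full_rank k n A \<longleftrightarrow>
     vector_space.dim (fscale :: 'f \<Rightarrow> _) (row_space k n A) = k * card (UNIV :: 'g set)"

definition prob_full_rank :: "'f::{field,finite} itself \<Rightarrow> 'g::{ab_group_add,finite} itself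
    \<Rightarrow> nat \<Rightarrow> nat \<Rightarrow> real" where
  "prob_full_rank TF TG k n =
     real (card {A \<in> (gmats k n :: (nat \<Rightarrow> nat \<Rightarrow> 'g \<Rightarrow> 'f) set). full_rank k n A})
     / real (card (gmats k n :: (nat \<Rightarrow> nat \<Rightarrow> 'g \<Rightarrow> 'f) set))"

end

theory Submission
  imports Defs "HOL-Library.FuncSet"
begin

text \<open>
  If \<open>A\<close> is not full-rank, the \<open>F\<close>-linear map \<open>b \<mapsto> bA\<close> on \<open>(FG)^k\<close> is not injective, so
  \<open>bA = 0\<close> for some \<open>b \<noteq> 0\<close>. For fixed \<open>b\<close> the map \<open>A \<mapsto> bA\<close> is additive, and each coordinate
  of \<open>bA\<close> ranges over the whole ideal \<open>W_b = {\<Sum>i. b_i a_i}\<close>, which has at least two elements;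
  hence at most a fraction \<open>|W_b|^(-n)\<close> of all matrices annihilate \<open>b\<close>. All entries of \<open>b\<close> lie in
  \<open>W_b\<close>, so at most \<open>|W|^k\<close> vectors share a given ideal \<open>W\<close>, and the union bound over the at most
  \<open>2^|FG|\<close> subsets of \<open>FG\<close> gives \<open>Pr(A not full-rank) \<le> 2^|FG| * 2^(-(n-k))\<close>, which decays
  exponentially when \<open>k \<approx> rn\<close> with \<open>r < 1\<close>.
\<close>

lemma sum_fun_apply: "sum f A x = (\<Sum>a\<in>A. f a x)"
  by (induction A rule: infinite_finite_induct) auto

interpretation fg: vector_space "fscale :: 'f::field \<Rightarrow> (nat \<Rightarrow> 'g \<Rightarrow> 'f) \<Rightarrow> _"
  by unfold_locales (auto simp: fscale_def fun_eq_iff algebra_simps)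

interpretation fg_pair: vector_space_pair "fscale :: 'f::field \<Rightarrow> (nat \<Rightarrow> 'g \<Rightarrow> 'f) \<Rightarrow> _" fscale
  by (intro vector_space_pair.intro fg.vector_space_axioms)

lemma gconv_add_left: "gconv (x + y) a = gconv x a + gconv y a"
  by (auto simp: gconv_def fun_eq_iff algebra_simps sum.distrib)

lemma gconv_add_right: "gconv x (a + b) = gconv x a + gconv x b"
  by (auto simp: gconv_def fun_eq_iff algebra_simps sum.distrib)

lemma gconv_scale_left: "gconv (\<lambda>g. c * x g) a = (\<lambda>g. c * gconv x a g)"
  by (auto simp: gconv_def fun_eq_iff algebra_simps sum_distrib_left)

lemma gconv_zero_right [simp]: "gconv x 0 = 0"
  by (auto simp: gconv_def fun_eq_iff)

lemma gconv_unit_right [simp]: "gconv x (\<lambda>g. if g = 0 then 1 else 0) = x"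
proof
  fix y
  have "gconv x (\<lambda>g. if g = 0 then 1 else 0) y = (\<Sum>h\<in>UNIV. if h = y then x h else 0)"
    unfolding gconv_def by (intro sum.cong) auto
  then show "gconv x (\<lambda>g. if g = 0 then 1 else 0) y = x y" by simp
qed

definition row_map :: "nat \<Rightarrow> nat \<Rightarrow> (nat \<Rightarrow> nat \<Rightarrow> 'g::{ab_group_add,finite} \<Rightarrow> 'f::field)
    \<Rightarrow> (nat \<Rightarrow> 'g \<Rightarrow> 'f) \<Rightarrow> (nat \<Rightarrow> 'g \<Rightarrow> 'f)" where
  "row_map k n A b = (\<lambda>j. if j < n then (\<Sum>i<k. gconv (b i) (A i j)) else 0)"

lemma row_space_eq_range: "row_space k n A = range (row_map k n A)"
  unfolding row_space_def row_map_def by auto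

lemma row_map_add: "row_map k n A (b + b') = row_map k n A b + row_map k n A b'"
  by (auto simp: row_map_def fun_eq_iff gconv_add_left sum.distrib)

lemma row_map_fscale: "row_map k n A (fscale c b) = fscale c (row_map k n A b)"
  by (auto simp: row_map_def fscale_def fun_eq_iff gconv_scale_left sum_fun_apply sum_distrib_left)

lemma row_map_add_matrix: "row_map k n (A + A') b = row_map k n A b + row_map k n A' b"
  by (auto simp: row_map_def fun_eq_iff gconv_add_right sum.distrib)

lemma linear_row_map: "Vector_Spaces.linear fscale fscale (row_map k n A)"
  using fg.vector_space_axioms by (auto simp: Vector_Spaces.linear_iff row_map_add row_map_fscale)

definition fg_vectors :: "nat \<Rightarrow> (nat \<Rightarrow> 'g \<Rightarrow> 'f::zero) set" where
  "fg_vectors k = {b. \<forall>i\<ge>k. b i = 0}"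

lemma range_row_map: "range (row_map k n A) = row_map k n A ` fg_vectors k"
proof (intro equalityI subsetI)
  fix y assume "y \<in> range (row_map k n A)"
  then obtain b where y: "y = row_map k n A b" by auto
  define b' where "b' = (\<lambda>i. if i < k then b i else 0)"
  have "row_map k n A b' = y" unfolding y row_map_def b'_def by (auto intro!: ext sum.cong)
  moreover have "b' \<in> fg_vectors k" by (auto simp: b'_def fg_vectors_def)
  ultimately show "y \<in> row_map k n A ` fg_vectors k" by auto
qed auto

definition unit_vec :: "nat \<Rightarrow> 'g \<Rightarrow> nat \<Rightarrow> 'g \<Rightarrow> 'f::{zero,one}" where
  "unit_vec i g = (\<lambda>i' g'. if i' = i \<and> g' = g then 1 else 0)"

lemma inj_unit_vec: "inj (\<lambda>(i, g). (unit_vec i g :: nat \<Rightarrow> 'g \<Rightarrow> 'f::zero_neq_one))"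
  by (auto simp: inj_def unit_vec_def fun_eq_iff split: if_splits)

lemma sum_unit_vec_apply:
  fixes g :: "'g::finite"
  shows "(\<Sum>p\<in>{..<k} \<times> UNIV. fscale (u p) (unit_vec (fst p) (snd p))) i g
           = (if i < k then u (i, g) else 0 :: 'f::field)"
proof -
  have "(\<Sum>p\<in>{..<k} \<times> UNIV. fscale (u p) (unit_vec (fst p) (snd p))) i g
      = (\<Sum>p\<in>{..<k} \<times> UNIV. if p = (i, g) then u (i, g) else 0)"
    unfolding sum_fun_apply by (intro sum.cong) (auto simp: fscale_def unit_vec_def)
  then show ?thesis by simp
qed

definition unit_vecs :: "nat \<Rightarrow> (nat \<Rightarrow> 'g::finite \<Rightarrow> 'f::field) set" where
  "unit_vecs k = (\<lambda>(i, g). unit_vec i g) ` ({..<k} \<times> UNIV)"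

lemma card_unit_vecs: "card (unit_vecs k :: (nat \<Rightarrow> 'g::finite \<Rightarrow> 'f::field) set) = k * card (UNIV :: 'g set)"
  unfolding unit_vecs_def
  by (subst card_image) (auto intro: inj_on_subset[OF inj_unit_vec] simp: card_cartesian_product)

lemma subspace_fg_vectors: "fg.subspace (fg_vectors k)"
  unfolding fg.subspace_def fg_vectors_def fscale_def by (auto simp: fun_eq_iff)

lemma span_unit_vecs: "fg.span (unit_vecs k :: (nat \<Rightarrow> 'g::finite \<Rightarrow> 'f::field) set) = fg_vectors k"
proof (rule fg.span_subspace)
  let ?E = "unit_vecs k :: (nat \<Rightarrow> 'g \<Rightarrow> 'f) set"
  show "?E \<subseteq> fg_vectors k" unfolding unit_vecs_def fg_vectors_def unit_vec_def by auto
  show "fg_vectors k \<subseteq> fg.span ?E"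
  proof
    fix x :: "nat \<Rightarrow> 'g \<Rightarrow> 'f" assume x: "x \<in> fg_vectors k"
    have "x = (\<Sum>p\<in>{..<k} \<times> UNIV. fscale (x (fst p) (snd p)) (unit_vec (fst p) (snd p)))"
      using x by (auto simp: sum_unit_vec_apply fg_vectors_def fun_eq_iff)
    also have "\<dots> \<in> fg.span ?E"
      by (intro fg.span_sum fg.span_scale fg.span_base) (auto simp: unit_vecs_def)
    finally show "x \<in> fg.span ?E" .
  qed
qed (rule subspace_fg_vectors)

lemma independent_unit_vecs: "fg.independent (unit_vecs k :: (nat \<Rightarrow> 'g::finite \<Rightarrow> 'f::field) set)"
proof
  let ?E = "unit_vecs k :: (nat \<Rightarrow> 'g \<Rightarrow> 'f) set"
  have "finite ?E" by (simp add: unit_vecs_def)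
  moreover assume "fg.dependent ?E"
  ultimately obtain u where u: "\<exists>v\<in>?E. u v \<noteq> 0" "(\<Sum>v\<in>?E. fscale (u v) v) = 0"
    by (auto simp: fg.dependent_finite)
  then obtain i g where ig: "i < k" "u (unit_vec i g) \<noteq> 0" unfolding unit_vecs_def by auto
  have "0 = (\<Sum>v\<in>?E. fscale (u v) v) i g" using u by simp
  also have "\<dots> = (\<Sum>p\<in>{..<k} \<times> UNIV. fscale (u (unit_vec (fst p) (snd p))) (unit_vec (fst p) (snd p))) i g"
    unfolding unit_vecs_def
    by (subst sum.reindex) (auto intro: inj_on_subset[OF inj_unit_vec] simp: case_prod_beta)
  also have "\<dots> = u (unit_vec i g)" using ig(1) by (simp add: sum_unit_vec_apply)
  finally show False using ig by simp
qed

lemma not_full_rank_imp_annihilated: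
  fixes A :: "nat \<Rightarrow> nat \<Rightarrow> 'g::{ab_group_add,finite} \<Rightarrow> 'f::field"
  assumes "\<not> full_rank k n A"
  shows "\<exists>b\<in>fg_vectors k. b \<noteq> 0 \<and> row_map k n A b = 0"
proof (rule ccontr)
  assume "\<not> ?thesis"
  then have inj: "inj_on (row_map k n A) (fg.span (unit_vecs k))"
    unfolding span_unit_vecs
    using fg_pair.linear_inj_on_iff_eq_0[OF linear_row_map[of k n A] subspace_fg_vectors] by auto
  have "row_space k n A = fg.span (row_map k n A ` unit_vecs k)"
    unfolding row_space_eq_range range_row_map fg_pair.linear_span_image[OF linear_row_map]
      span_unit_vecs ..
  then have "fg.dim (row_space k n A) = card (unit_vecs k :: (nat \<Rightarrow> 'g \<Rightarrow> 'f) set)"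
    using fg.dim_span_eq_card_independent[OF
        fg_pair.linear_independent_injective_image[OF linear_row_map independent_unit_vecs inj]]
      card_image[OF inj_on_subset[OF inj fg.span_superset]] by simp
  then show False using assms unfolding full_rank_def card_unit_vecs by simp
qed

lemma card_eq_card_kernel_mult_card_image:
  fixes f :: "'a::ab_group_add \<Rightarrow> 'b::ab_group_add"
  assumes "finite S" and "0 \<in> S"
    and add_closed: "\<And>x y. x \<in> S \<Longrightarrow> y \<in> S \<Longrightarrow> x + y \<in> S"
    and minus_closed: "\<And>x. x \<in> S \<Longrightarrow> - x \<in> S"
    and additive: "\<And>x y. x \<in> S \<Longrightarrow> y \<in> S \<Longrightarrow> f (x + y) = f x + f y"
  shows "card S = card {x\<in>S. f x = 0} * card (f ` S)"
proof -
  have fibre: "card {x\<in>S. f x = f x0} = card {x\<in>S. f x = 0}" if "x0 \<in> S" for x0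
  proof -
    have diff: "w - x0 \<in> S \<and> f (w - x0) = f w - f x0" if "w \<in> S" for w
      using add_closed[OF that minus_closed[OF \<open>x0 \<in> S\<close>]]
        additive[OF that minus_closed[OF \<open>x0 \<in> S\<close>]]
        additive[OF \<open>x0 \<in> S\<close> minus_closed[OF \<open>x0 \<in> S\<close>]] additive[OF \<open>0 \<in> S\<close> \<open>0 \<in> S\<close>]
      by (simp add: add.commute eq_neg_iff_add_eq_0)
    have "(\<lambda>z. z + x0) ` {x\<in>S. f x = 0} = {x\<in>S. f x = f x0}"
    proof (intro equalityI subsetI)
      fix w assume "w \<in> {x\<in>S. f x = f x0}"
      with diff[of w] show "w \<in> (\<lambda>z. z + x0) ` {x\<in>S. f x = 0}"
        by (auto intro!: image_eqI[where x = "w - x0"])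
    qed (use \<open>x0 \<in> S\<close> add_closed additive in auto)
    then show ?thesis by (metis (no_types, lifting) card_image add_right_imp_eq inj_onI)
  qed
  have "card S = card (\<Union>y\<in>f ` S. {x\<in>S. f x = y})" by (intro arg_cong[where f = card]) auto
  also have "\<dots> = (\<Sum>y\<in>f ` S. card {x\<in>S. f x = y})"
    using \<open>finite S\<close> by (intro card_UN_disjoint) auto
  also have "\<dots> = (\<Sum>y\<in>f ` S. card {x\<in>S. f x = 0})" by (intro sum.cong) (auto simp: fibre)
  finally show ?thesis by simp
qed

lemma finite_gmats: "finite (gmats k n :: (nat \<Rightarrow> nat \<Rightarrow> 'g::{ab_group_add,finite} \<Rightarrow> 'f::{field,finite}) set)"
proof (rule inj_on_finite)
  let ?restr = "\<lambda>A :: nat \<Rightarrow> nat \<Rightarrow> 'g \<Rightarrow> 'f. \<lambda>p\<in>{..<k} \<times> {..<n}. A (fst p) (snd p)"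
  show "inj_on ?restr (gmats k n)"
  proof
    fix A B assume "A \<in> gmats k n" "B \<in> gmats k n" and eq: "?restr A = ?restr B"
    have "A i j = B i j" for i j
      using fun_cong[OF eq, of "(i, j)"] \<open>A \<in> gmats k n\<close> \<open>B \<in> gmats k n\<close>
      by (cases "i < k \<and> j < n") (auto simp: gmats_def)
    then show "A = B" by (simp add: fun_eq_iff)
  qed
  show "?restr ` gmats k n \<subseteq> PiE ({..<k} \<times> {..<n}) (\<lambda>_. UNIV)" by auto
qed (simp add: finite_PiE)

lemma card_fg_vectors_entries_le:
  fixes W :: "('g \<Rightarrow> 'f::zero) set"
  assumes "finite W"
  shows "finite {b \<in> fg_vectors k. \<forall>i<k. b i \<in> W}" "card {b \<in> fg_vectors k. \<forall>i<k. b i \<in> W} \<le> card W ^ k"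
proof -
  let ?S = "{b \<in> fg_vectors k. \<forall>i<k. b i \<in> W}"
  have inj: "inj_on (\<lambda>b. restrict b {..<k}) ?S"
  proof
    fix a b assume "a \<in> ?S" "b \<in> ?S" and eq: "restrict a {..<k} = restrict b {..<k}"
    have "a i = b i" for i
      using fun_cong[OF eq, of i] \<open>a \<in> ?S\<close> \<open>b \<in> ?S\<close> by (cases "i < k") (auto simp: fg_vectors_def)
    then show "a = b" by (simp add: fun_eq_iff)
  qed
  have sub: "(\<lambda>b. restrict b {..<k}) ` ?S \<subseteq> PiE {..<k} (\<lambda>_. W)" by auto
  have fin: "finite (PiE {..<k} (\<lambda>_. W))" using assms by (simp add: finite_PiE)
  show "finite ?S" using inj_on_finite[OF inj sub fin] .
  show "card ?S \<le> card W ^ k" using card_inj_on_le[OF inj sub fin] by (simp add: card_PiE)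
qed

lemma finite_fg_vectors: "finite (fg_vectors k :: (nat \<Rightarrow> 'g::finite \<Rightarrow> 'f::{zero,finite}) set)"
  using card_fg_vectors_entries_le(1)[of "UNIV :: ('g \<Rightarrow> 'f) set" k] by simp

text \<open>The ideal of \<open>FG\<close> generated by the entries of \<open>b\<close>; as \<open>A\<close> varies, every coordinate of
  \<open>bA\<close> takes all values in it.\<close>

definition row_ideal :: "nat \<Rightarrow> (nat \<Rightarrow> 'g::{ab_group_add,finite} \<Rightarrow> 'f::field) \<Rightarrow> ('g \<Rightarrow> 'f) set" where
  "row_ideal k b = {\<Sum>i<k. gconv (b i) (a i) | a. True}"

lemma entry_mem_row_ideal:
  fixes b :: "nat \<Rightarrow> 'g::{ab_group_add,finite} \<Rightarrow> 'f::field"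
  assumes "i < k"
  shows "b i \<in> row_ideal k b"
proof -
  define a :: "nat \<Rightarrow> 'g \<Rightarrow> 'f" where "a = (\<lambda>i'. if i' = i then (\<lambda>g. if g = 0 then 1 else 0) else 0)"
  have "(\<Sum>i'<k. gconv (b i') (a i')) = (\<Sum>i'<k. if i' = i then b i else 0)"
    by (intro sum.cong) (auto simp: a_def)
  then show ?thesis using assms unfolding row_ideal_def by (auto intro!: exI[of _ a])
qed

lemma two_le_card_row_ideal:
  fixes b :: "nat \<Rightarrow> 'g::{ab_group_add,finite} \<Rightarrow> 'f::{field,finite}"
  assumes "b \<in> fg_vectors k" "b \<noteq> 0"
  shows "2 \<le> card (row_ideal k b)"
proof -
  obtain i where "b i \<noteq> 0" using assms(2) by (auto simp: fun_eq_iff)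
  moreover from this have "i < k" using assms(1) by (auto simp: fg_vectors_def not_le[symmetric])
  moreover have "0 \<in> row_ideal k b" unfolding row_ideal_def by (auto intro!: exI[of _ "\<lambda>_. 0"])
  ultimately have "{0, b i} \<subseteq> row_ideal k b" by (auto intro: entry_mem_row_ideal)
  then have "card {0, b i} \<le> card (row_ideal k b)" by (intro card_mono) auto
  with \<open>b i \<noteq> 0\<close> show ?thesis by simp
qed

lemma row_ideal_columns_subset_image_row_map:
  "(\<lambda>w j. if j < n then w j else 0) ` PiE {..<n} (\<lambda>_. row_ideal k b)
     \<subseteq> (\<lambda>A. row_map k n A b) ` gmats k n"
proof
  fix y assume "y \<in> (\<lambda>w j. if j < n then w j else 0) ` PiE {..<n} (\<lambda>_. row_ideal k b)"
  then obtain w where w: "\<forall>j<n. w j \<in> row_ideal k b" and y: "y = (\<lambda>j. if j < n then w j else 0)"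
    by auto
  then obtain a where a: "\<forall>j<n. w j = (\<Sum>i<k. gconv (b i) (a j i))"
    unfolding row_ideal_def by simp metis
  define A where "A = (\<lambda>i j. if i < k \<and> j < n then a j i else 0)"
  have "A \<in> gmats k n" by (auto simp: A_def gmats_def)
  moreover have "row_map k n A b = y"
    using a by (auto simp: row_map_def A_def y fun_eq_iff intro: sum.cong)
  ultimately show "y \<in> (\<lambda>A. row_map k n A b) ` gmats k n" by blast
qed

lemma card_annihilators_mult_le:
  fixes b :: "nat \<Rightarrow> 'g::{ab_group_add,finite} \<Rightarrow> 'f::{field,finite}"
  shows "card {A \<in> gmats k n. row_map k n A b = 0} * card (row_ideal k b) ^ n
           \<le> card (gmats k n :: (nat \<Rightarrow> nat \<Rightarrow> 'g \<Rightarrow> 'f) set)"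
proof -
  let ?M = "gmats k n :: (nat \<Rightarrow> nat \<Rightarrow> 'g \<Rightarrow> 'f) set"
  let ?f = "\<lambda>A. row_map k n A b"
  let ?pad = "\<lambda>w j. if j < n then w j else 0 :: 'g \<Rightarrow> 'f"
  have "inj_on ?pad (PiE {..<n} (\<lambda>_. row_ideal k b))"
    by (intro inj_onI, erule (1) PiE_ext) (metis lessThan_iff)
  then have "card (row_ideal k b) ^ n \<le> card (?f ` ?M)"
    using card_inj_on_le[OF _ row_ideal_columns_subset_image_row_map] finite_gmats
    by (fastforce simp: card_PiE)
  moreover have "card ?M = card {A \<in> ?M. ?f A = 0} * card (?f ` ?M)"
    by (rule card_eq_card_kernel_mult_card_image[OF finite_gmats]) (auto simp: gmats_def row_map_add_matrix)
  ultimately show ?thesis by (simp add: mult_le_mono2)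
qed

lemma sum_inverse_power_card_le:
  fixes f :: "'a \<Rightarrow> 'u set"
  assumes "finite B" "finite U" "f ` B \<subseteq> Pow U" "k \<le> n"
    and card_ge: "\<And>b. b \<in> B \<Longrightarrow> 2 \<le> card (f b)"
    and fibre_le: "\<And>W. W \<in> f ` B \<Longrightarrow> card {b\<in>B. f b = W} \<le> card W ^ k"
  shows "(\<Sum>b\<in>B. 1 / real (card (f b)) ^ n) \<le> 2 ^ card U * (1/2) ^ (n - k)"
proof -
  have term_le: "real (card {b\<in>B. f b = W}) * (1 / real (card W) ^ n) \<le> (1/2) ^ (n - k)"
    if "W \<in> f ` B" for W
  proof -
    have "2 \<le> card W" using that card_ge by auto
    have "real (card {b\<in>B. f b = W}) * (1 / real (card W) ^ n) \<le> real (card W) ^ k / real (card W) ^ n"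
      using fibre_le[OF that] by (simp add: divide_right_mono flip: of_nat_power)
    also have "\<dots> = 1 / real (card W) ^ (n - k)"
      using \<open>2 \<le> card W\<close> \<open>k \<le> n\<close> by (simp add: power_diff)
    also have "\<dots> \<le> (1/2) ^ (n - k)"
      using \<open>2 \<le> card W\<close> by (simp add: power_one_over divide_left_mono power_mono)
    finally show ?thesis .
  qed
  have "(\<Sum>b\<in>B. 1 / real (card (f b)) ^ n)
      = (\<Sum>W\<in>f ` B. real (card {b\<in>B. f b = W}) * (1 / real (card W) ^ n))"
    using \<open>finite B\<close> by (subst sum.group[symmetric, where g = f]) auto
  also have "\<dots> \<le> real (card (f ` B)) * (1/2) ^ (n - k)"
    using sum_mono[OF term_le] by simp
  also have "\<dots> \<le> 2 ^ card U * (1/2) ^ (n - k)"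
  proof (rule mult_right_mono)
    have "card (f ` B) \<le> card (Pow U)" using assms(2,3) by (intro card_mono) auto
    then show "real (card (f ` B)) \<le> 2 ^ card U" using \<open>finite U\<close> by (simp add: card_Pow flip: of_nat_power)
  qed simp
  finally show ?thesis .
qed

lemma one_minus_prob_full_rank:
  "1 - prob_full_rank TYPE('f::{field,finite}) TYPE('g::{ab_group_add,finite}) k n
     = real (card {A \<in> gmats k n :: (nat \<Rightarrow> nat \<Rightarrow> 'g \<Rightarrow> 'f) set. \<not> full_rank k n A})
       / real (card (gmats k n :: (nat \<Rightarrow> nat \<Rightarrow> 'g \<Rightarrow> 'f) set))"
proof -
  let ?M = "gmats k n :: (nat \<Rightarrow> nat \<Rightarrow> 'g \<Rightarrow> 'f) set"
  let ?good = "card {A \<in> ?M. full_rank k n A}" and ?bad = "card {A \<in> ?M. \<not> full_rank k n A}"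
  have "0 \<in> ?M" by (simp add: gmats_def)
  then have "card ?M \<noteq> 0" using card_gt_0_iff[of ?M] finite_gmats by blast
  moreover have "card ?M = ?good + ?bad"
    using finite_gmats[of k n]
    by (subst card_Un_disjoint[symmetric]) (auto intro: arg_cong[where f = card] rev_finite_subset)
  ultimately have "real ?good + real ?bad \<noteq> 0" "real (card ?M) = real ?good + real ?bad"
    by (simp_all flip: of_nat_add)
  then show ?thesis unfolding prob_full_rank_def by (simp add: field_simps)
qed

lemma prob_not_full_rank_le_sum:
  "real (card {A \<in> gmats k n :: (nat \<Rightarrow> nat \<Rightarrow> 'g::{ab_group_add,finite} \<Rightarrow> 'f::{field,finite}) set.
                 \<not> full_rank k n A})
       / real (card (gmats k n :: (nat \<Rightarrow> nat \<Rightarrow> 'g \<Rightarrow> 'f) set))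
     \<le> (\<Sum>b \<in> fg_vectors k - {0}. 1 / real (card (row_ideal k b :: ('g \<Rightarrow> 'f) set)) ^ n)"
proof -
  let ?M = "gmats k n :: (nat \<Rightarrow> nat \<Rightarrow> 'g \<Rightarrow> 'f) set"
  let ?B = "fg_vectors k - {0} :: (nat \<Rightarrow> 'g \<Rightarrow> 'f) set"
  let ?K = "\<lambda>b. {A \<in> ?M. row_map k n A b = 0}"
  have "finite ?B" using finite_fg_vectors by blast
  have "0 \<in> ?M" by (simp add: gmats_def)
  then have "card ?M > 0" using card_gt_0_iff[of ?M] finite_gmats by blast
  have "{A \<in> ?M. \<not> full_rank k n A} \<subseteq> (\<Union>b\<in>?B. ?K b)"
    using not_full_rank_imp_annihilated by fastforce
  then have "card {A \<in> ?M. \<not> full_rank k n A} \<le> card (\<Union>b\<in>?B. ?K b)"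
    using \<open>finite ?B\<close> finite_gmats[of k n] by (intro card_mono) (auto intro: rev_finite_subset)
  also have "\<dots> \<le> (\<Sum>b\<in>?B. card (?K b))" using \<open>finite ?B\<close> by (rule card_UN_le)
  finally have "card {A \<in> ?M. \<not> full_rank k n A} \<le> (\<Sum>b\<in>?B. card (?K b))" .
  then have "real (card {A \<in> ?M. \<not> full_rank k n A}) / real (card ?M)
      \<le> (\<Sum>b\<in>?B. real (card (?K b))) / real (card ?M)"
    by (intro divide_right_mono) (simp_all flip: of_nat_sum)
  also have "\<dots> = (\<Sum>b\<in>?B. real (card (?K b)) / real (card ?M))" by (rule sum_divide_distrib)
  also have "\<dots> \<le> (\<Sum>b\<in>?B. 1 / real (card (row_ideal k b)) ^ n)"
  proof (rule sum_mono)
    fix b assume "b \<in> ?B"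
    then have "0 < real (card (row_ideal k b)) ^ n" using two_le_card_row_ideal[of b k] by simp
    moreover have "real (card (?K b)) * real (card (row_ideal k b)) ^ n \<le> real (card ?M)"
      using card_annihilators_mult_le[of k n b] by (simp flip: of_nat_power of_nat_mult)
    ultimately show "real (card (?K b)) / real (card ?M) \<le> 1 / real (card (row_ideal k b)) ^ n"
      using \<open>card ?M > 0\<close> by (simp add: field_simps)
  qed
  finally show ?thesis .
qed

lemma prob_not_full_rank_le:
  assumes "k \<le> n"
  shows "1 - prob_full_rank TYPE('f::{field,finite}) TYPE('g::{ab_group_add,finite}) k n
           \<le> 2 ^ card (UNIV :: ('g \<Rightarrow> 'f) set) * (1/2) ^ (n - k)"
proof -
  have "(\<Sum>b \<in> fg_vectors k - {0}. 1 / real (card (row_ideal k b :: ('g \<Rightarrow> 'f) set)) ^ n)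
      \<le> 2 ^ card (UNIV :: ('g \<Rightarrow> 'f) set) * (1/2) ^ (n - k)"
  proof (rule sum_inverse_power_card_le)
    fix W :: "('g \<Rightarrow> 'f) set"
    have "{b \<in> fg_vectors k - {0}. row_ideal k b = W} \<subseteq> {b \<in> fg_vectors k. \<forall>i<k. b i \<in> W}"
      using entry_mem_row_ideal by blast
    then have "card {b \<in> fg_vectors k - {0}. row_ideal k b = W}
        \<le> card {b \<in> fg_vectors k. \<forall>i<k. b i \<in> W}"
      by (rule card_mono[OF card_fg_vectors_entries_le(1)[OF finite]])
    also have "\<dots> \<le> card W ^ k" by (rule card_fg_vectors_entries_le(2)[OF finite])
    finally show "card {b \<in> fg_vectors k - {0}. row_ideal k b = W} \<le> card W ^ k" .
  qed (use assms finite_fg_vectors two_le_card_row_ideal in auto)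
  then show ?thesis unfolding one_minus_prob_full_rank by (rule order_trans[OF prob_not_full_rank_le_sum])
qed

lemma nat_round_mult_le:
  fixes r :: real
  assumes "0 \<le> r" "r \<le> 1"
  shows "nat (round (r * real n)) \<le> n"
proof -
  have "r * real n \<le> real n" using assms by (simp add: mult_left_le_one_le)
  then show ?thesis using of_int_round_le[of "r * real n"] by linarith
qed

lemma half_power_round_le:
  fixes r :: real
  assumes "0 \<le> r" "r \<le> 1"
  shows "(1/2) ^ (n - nat (round (r * real n))) \<le> sqrt 2 * exp (- (ln 2 * (1 - r)) * real n)"
proof -
  let ?k = "nat (round (r * real n))"
  have "0 \<le> round (r * real n)" using round_mono[of 0 "r * real n"] assms by simp
  then have "real ?k \<le> r * real n + 1/2" using of_int_round_le[of "r * real n"] by simp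
  then have "(1 - r) * real n - 1/2 \<le> real (n - ?k)"
    using nat_round_mult_le[OF assms] by (simp add: of_nat_diff algebra_simps)
  have "(1/2) ^ (n - ?k) = (2::real) powr (- real (n - ?k))"
    by (simp add: powr_minus_divide powr_realpow power_one_over)
  also have "\<dots> \<le> 2 powr (1/2 - (1 - r) * real n)"
    using \<open>(1 - r) * real n - 1/2 \<le> real (n - ?k)\<close> by (intro powr_mono) simp_all
  also have "\<dots> = 2 powr (1/2) / 2 powr ((1 - r) * real n)" by (rule powr_diff)
  also have "\<dots> = sqrt 2 / exp ((1 - r) * real n * ln 2)"
    by (subst powr_half_sqrt) (simp_all add: powr_def)
  also have "\<dots> = sqrt 2 * exp (- (ln 2 * (1 - r)) * real n)"
    by (simp add: exp_minus divide_inverse mult_ac)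
  finally show ?thesis .
qed

theorem lemma6p3:
  fixes r :: real
  assumes "0 < r" and "r < 1"
  defines "P \<equiv> (\<lambda>n. prob_full_rank TYPE('f::{field,finite}) TYPE('g::{ab_group_add,finite})
                     (nat (round (r * real n))) n)"
  shows "(P \<longlongrightarrow> 1) sequentially \<and> ((\<lambda>n. 1 - P n) \<longlongrightarrow> 0) sequentially \<and>
         (\<exists>C c. 0 < c \<and> (\<forall>n. \<bar>1 - P n\<bar> \<le> C * exp (- c * real n)))"
proof -
  define c where "c = ln 2 * (1 - r)"
  define C where "C = 2 ^ card (UNIV :: ('g \<Rightarrow> 'f) set) * sqrt 2"
  have "0 < c" using assms by (simp add: c_def)
  have bound: "0 \<le> 1 - P n \<and> 1 - P n \<le> C * exp (- c * real n)" for n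
  proof
    show "0 \<le> 1 - P n" unfolding P_def one_minus_prob_full_rank by simp
    have "1 - P n \<le> 2 ^ card (UNIV :: ('g \<Rightarrow> 'f) set) * (1/2) ^ (n - nat (round (r * real n)))"
      unfolding P_def using assms by (intro prob_not_full_rank_le nat_round_mult_le) auto
    also have "\<dots> \<le> C * exp (- c * real n)"
      using half_power_round_le[of r n] assms by (simp add: C_def c_def)
    finally show "1 - P n \<le> C * exp (- c * real n)" .
  qed
  have "((\<lambda>n. C * exp (- c) ^ n) \<longlongrightarrow> 0) sequentially"
    using \<open>0 < c\<close> by (intro tendsto_mult_right_zero LIMSEQ_power_zero) simp_all
  then have exp_decay: "((\<lambda>n. C * exp (- c * real n)) \<longlongrightarrow> 0) sequentially"
    by (simp add: exp_of_nat_mult[symmetric] mult.commute)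
  have "((\<lambda>n. 1 - P n) \<longlongrightarrow> 0) sequentially"
    by (rule tendsto_sandwich[OF _ _ tendsto_const exp_decay]) (use bound in auto)
  moreover from tendsto_diff[OF tendsto_const this, of 1] have "(P \<longlongrightarrow> 1) sequentially" by simp
  ultimately show ?thesis using bound \<open>0 < c\<close> by fastforce
qed

end
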